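(* Let $p\ge3$ be a prime which is not a Wieferich prime. Then $P(p^k,n)=p^{k-1}P(p,n)$ for all positive integers $k$ and $n$.
   Context: For positive integers $m,n$, let $\mathbf{Z}_m$ be the integers modulo $m$ and $T:\mathbf{Z}_m^n\to\mathbf{Z}_m^n$, $T(a_0,\dots,a_{n-1})=(a_0+a_1,a_1+a_2,\dots,a_{n-1}+a_0)$. For $\mathbf{a}\in\mathbf{Z}_m^n$ the cycle length of $(T^k\mathbf{a})_{k\ge0}$ is the smallest positive integer $P$ such that there is $N$ with $T^{k+P}\mathbf{a}=T^k\mathbf{a}$ for all $k\ge N$. $P(m,n)$ denotes the maximum of these cycle lengths over all $\mathbf{a}\in\mathbf{Z}_m^n$. A prime $p$ is a Wieferich prime if $2^{p-1}\equiv1\pmod{p^2}$. *)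

theory Defs
  imports "HOL-Number_Theory.Number_Theory"
begin

text \<open>Elements of Z_m^n are represented as functions a :: nat => nat with
  a i \<in> {0..<m} for i < n, and a i = 0 for i \<ge> n (canonical representatives).\<close>

definition vecs :: "nat \<Rightarrow> nat \<Rightarrow> (nat \<Rightarrow> nat) set" where
  "vecs m n = {a. (\<forall>i<n. a i < m) \<and> (\<forall>i\<ge>n. a i = 0)}"

definition Tmap :: "nat \<Rightarrow> nat \<Rightarrow> (nat \<Rightarrow> nat) \<Rightarrow> (nat \<Rightarrow> nat)" where
  "Tmap m n a = (\<lambda>i. if i < n then (a i + a ((i + 1) mod n)) mod m else 0)"

definition cycle_len :: "nat \<Rightarrow> nat \<Rightarrow> (nat \<Rightarrow> nat) \<Rightarrow> nat" where
  "cycle_len m n a = (LEAST P. P > 0 \<and>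
      (\<exists>N. \<forall>k\<ge>N. (Tmap m n ^^ (k + P)) a = (Tmap m n ^^ k) a))"

definition Pmax :: "nat \<Rightarrow> nat \<Rightarrow> nat" where
  "Pmax m n = Max (cycle_len m n ` vecs m n)"

definition wieferich :: "nat \<Rightarrow> bool" where
  "wieferich p \<longleftrightarrow> prime p \<and> [2 ^ (p - 1) = 1] (mod p ^ 2)"

end

theory Submission
  imports Defs "HOL-Computational_Algebra.Polynomial"
begin

(* Identify Z_m^n with Z[x] modulo the ideal (m, x^n - 1) via a |-> sum a_i x^i.  Then T is
   multiplication by w = 1 + x^(n-1), i.e. by 1 + x^(-1), and P(m,n) is the least eventual period
   of the powers of w modulo (m, x^n - 1).

   If w^(N+R) = w^N + p^(j+1) H, raising to the p-th power gives
   w^(pN+pR) = w^(pN) + p^(j+2) w^(N(p-1)) H  modulo p^(j+3)  when p >= 3.  Hence, as soon as the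
   period Q modulo p is not a period modulo p^2, the period modulo p^k is exactly p^(k-1) Q.

   It remains to see that Q is not a period modulo p^2.  Write n = p^e m with p not dividing m;
   by Frobenius, Q divides p^e L where L = p^phi(m) - 1 is prime to p.  If e = 0, evaluating at
   x = 1 would give 2^L = 1 modulo p^2, which makes p a Wieferich prime.  If e > 0, then modulo
   (p^2, x^(p^e) - 1) we have w^(p^e) = 2 + pG, invertible up to the factor
   4 = (2 + pG)(2 - pG), and (2 + pG)^L = 1 fails because G has the coefficient 1 at a nonzero
   exponent while p does not divide L 2^(L-1). *)

section \<open>Binomial expansions\<close>

lemma binomial_ring_prime:
  fixes a b :: "'a::comm_semiring_1"
  assumes "prime p"
  shows "(a + b) ^ p = a ^ p + b ^ p +
    of_nat p * (\<Sum>k\<in>{1..<p}. of_nat ((p choose k) div p) * a ^ k * b ^ (p - k))"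
proof -
  have "{..p} = insert 0 (insert p {1..<p})"
    using prime_ge_2_nat[OF assms] by auto
  moreover have "of_nat (p choose k) = (of_nat p * of_nat ((p choose k) div p) :: 'a)"
    if "k \<in> {1..<p}" for k
  proof -
    have "p dvd p choose k" using dvd_choose_prime[of k p] that assms by auto
    then have "p * ((p choose k) div p) = p choose k" by simp
    then show ?thesis by (metis of_nat_mult)
  qed
  ultimately show ?thesis
    using prime_ge_2_nat[OF assms]
    by (simp add: binomial_ring[of a b p] sum_distrib_left mult.assoc add_ac)
qed

lemma power_add_mult_prime:
  fixes a t c :: "'a::comm_semiring_1"
  assumes "prime p"
  shows "\<exists>r. (a + t * c) ^ p =
    a ^ p + of_nat p * t * a ^ (p - 1) * c + of_nat p * t\<^sup>2 * r + t ^ p * c ^ p"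
proof -
  have p: "2 \<le> p" using prime_ge_2_nat[OF assms] .
  define r where "r = (\<Sum>k\<in>{1..<p - 1}. of_nat ((p choose k) div p) * a ^ k * t ^ (p - k - 2) * c ^ (p - k))"
  have "(t * c) ^ (p - k) = t\<^sup>2 * (t ^ (p - k - 2) * c ^ (p - k))" if "k \<in> {1..<p - 1}" for k
  proof -
    have "p - k = 2 + (p - k - 2)" using that by auto
    then show ?thesis by (metis power_add power_mult_distrib mult.assoc)
  qed
  then have "(\<Sum>k\<in>{1..<p - 1}. of_nat ((p choose k) div p) * a ^ k * (t * c) ^ (p - k)) = t\<^sup>2 * r"
    unfolding r_def sum_distrib_left by (intro sum.cong) (simp_all add: mult_ac)
  moreover have "{1..<p} = insert (p - 1) {1..<p - 1}" using p by auto
  moreover have "(p choose (p - 1)) div p = 1"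
  proof -
    have "p choose (p - 1) = p choose 1" using p by (intro binomial_symmetric[symmetric]) auto
    then show ?thesis using p by simp
  qed
  ultimately have "(a + t * c) ^ p = a ^ p + (t * c) ^ p + of_nat p * (a ^ (p - 1) * (t * c) + t\<^sup>2 * r)"
    using p unfolding binomial_ring_prime[OF assms] by simp
  then show ?thesis by (auto simp: algebra_simps power_mult_distrib)
qed

lemma power_add_mult_square:
  fixes a t c :: "'a::comm_semiring_1"
  shows "\<exists>r. (a + t * c) ^ L = a ^ L + of_nat L * t * a ^ (L - 1) * c + t\<^sup>2 * r"
proof (induction L)
  case (Suc L)
  then obtain r where r: "(a + t * c) ^ L = a ^ L + of_nat L * t * a ^ (L - 1) * c + t\<^sup>2 * r"
    by blast
  have "of_nat L * a ^ (L - 1) * a = (of_nat L * a ^ L :: 'a)"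
    by (cases L) (simp_all add: mult_ac)
  then have "(a + t * c) ^ Suc L = a ^ Suc L + of_nat (Suc L) * t * a ^ L * c
      + t\<^sup>2 * (of_nat L * a ^ (L - 1) * c\<^sup>2 + r * (a + t * c))"
    unfolding power_Suc2 r by (simp add: algebra_simps power2_eq_square)
  then show ?case by auto
qed (intro exI[of _ 0], simp)

section \<open>Congruences modulo $q$ and $x^n - 1$\<close>

definition cong_cyclic :: "int poly \<Rightarrow> int poly \<Rightarrow> nat \<Rightarrow> nat \<Rightarrow> bool"
    (\<open>(1[_ = _] '(' mod _, _'))\<close>)
  where "[f = g] (mod q, n) \<longleftrightarrow> (\<exists>a b. f - g = smult (int q) a + (monom 1 n - 1) * b)"

lemma cong_cyclic_refl [simp]: "[f = f] (mod q, n)"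
  unfolding cong_cyclic_def by (intro exI[of _ 0]) simp

lemma cong_cyclic_sym:
  assumes "[f = g] (mod q, n)"
  shows "[g = f] (mod q, n)"
proof -
  obtain a b where "f - g = smult (int q) a + (monom 1 n - 1) * b"
    using assms unfolding cong_cyclic_def by blast
  then have "g - f = smult (int q) (- a) + (monom 1 n - 1) * (- b)"
    by (simp add: algebra_simps)
  then show ?thesis unfolding cong_cyclic_def by blast
qed

lemma cong_cyclic_trans [trans]:
  assumes "[f = g] (mod q, n)" and "[g = h] (mod q, n)"
  shows "[f = h] (mod q, n)"
proof -
  obtain a b a' b' where "f - g = smult (int q) a + (monom 1 n - 1) * b"
    and "g - h = smult (int q) a' + (monom 1 n - 1) * b'"
    using assms unfolding cong_cyclic_def by blast
  then have "f - h = smult (int q) (a + a') + (monom 1 n - 1) * (b + b')"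
    by (simp add: algebra_simps smult_add_right)
  then show ?thesis unfolding cong_cyclic_def by blast
qed

lemma cong_cyclic_add:
  assumes "[f = g] (mod q, n)" and "[f' = g'] (mod q, n)"
  shows "[f + f' = g + g'] (mod q, n)"
proof -
  obtain a b a' b' where "f - g = smult (int q) a + (monom 1 n - 1) * b"
    and "f' - g' = smult (int q) a' + (monom 1 n - 1) * b'"
    using assms unfolding cong_cyclic_def by blast
  then have "f + f' - (g + g') = smult (int q) (a + a') + (monom 1 n - 1) * (b + b')"
    by (simp add: algebra_simps smult_add_right)
  then show ?thesis unfolding cong_cyclic_def by blast
qed

lemma cong_cyclic_mult:
  assumes "[f = g] (mod q, n)" and "[f' = g'] (mod q, n)"
  shows "[f * f' = g * g'] (mod q, n)"
proof -
  obtain a b a' b' where fg: "f - g = smult (int q) a + (monom 1 n - 1) * b"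
    and fg': "f' - g' = smult (int q) a' + (monom 1 n - 1) * b'"
    using assms unfolding cong_cyclic_def by blast
  have "f * f' - g * g' = (f - g) * f' + g * (f' - g')"
    by (simp add: algebra_simps)
  also have "\<dots> = smult (int q) (a * f' + g * a') + (monom 1 n - 1) * (b * f' + g * b')"
    unfolding fg fg' by (simp add: algebra_simps smult_add_right)
  finally show ?thesis unfolding cong_cyclic_def by blast
qed

lemma cong_cyclic_diff:
  "[f = g] (mod q, n) \<Longrightarrow> [f' = g'] (mod q, n) \<Longrightarrow> [f - f' = g - g'] (mod q, n)"
  using cong_cyclic_add[of f g q n "- f'" "- g'"] cong_cyclic_mult[of "-1" "-1" q n]
  by simp

lemma cong_cyclic_pow: "[f = g] (mod q, n) \<Longrightarrow> [f ^ k = g ^ k] (mod q, n)"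
  by (induction k) (simp_all add: cong_cyclic_mult)

lemma cong_cyclic_sum:
  "(\<And>i. i \<in> A \<Longrightarrow> [f i = g i] (mod q, n)) \<Longrightarrow> [(\<Sum>i\<in>A. f i) = (\<Sum>i\<in>A. g i)] (mod q, n)"
  by (induction A rule: infinite_finite_induct) (simp_all add: cong_cyclic_add)

lemma cong_cyclic_dvd_modulus:
  assumes "q' dvd q" and "[f = g] (mod q, n)"
  shows "[f = g] (mod q', n)"
proof -
  obtain c where "q = q' * c" using assms(1) by blast
  moreover obtain a b where "f - g = smult (int q) a + (monom 1 n - 1) * b"
    using assms(2) unfolding cong_cyclic_def by blast
  ultimately have "f - g = smult (int q') (smult (int c) a) + (monom 1 n - 1) * b"
    by simp
  then show ?thesis unfolding cong_cyclic_def by blast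
qed

lemma cong_cyclic_0_imp: "[f = g] (mod 0, n) \<Longrightarrow> [f = g] (mod q, n)"
  using cong_cyclic_dvd_modulus[of q 0] by simp

lemma cong_cyclic_dvd_degree:
  assumes "d dvd n" and "[f = g] (mod q, n)"
  shows "[f = g] (mod q, d)"
proof -
  obtain c where "n = d * c" using assms(1) by blast
  then have "monom (1::int) n = monom 1 d ^ c"
    by (simp add: monom_power)
  then have "monom (1::int) n - 1 = (monom 1 d - 1) * (\<Sum>i<c. monom 1 d ^ i)"
    by (simp add: power_diff_1_eq)
  moreover obtain a b where "f - g = smult (int q) a + (monom 1 n - 1) * b"
    using assms(2) unfolding cong_cyclic_def by blast
  ultimately show ?thesis
    unfolding cong_cyclic_def by (metis mult.assoc)
qed

lemma cong_cyclic_iff_exact: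
  "[f = g] (mod q, n) \<longleftrightarrow> (\<exists>h. [f = g + smult (int q) h] (mod 0, n))"
  unfolding cong_cyclic_def by (auto simp: algebra_simps)

lemma cong_cyclic_smult:
  assumes "[f = g] (mod q, n)"
  shows "[smult (int c) f = smult (int c) g] (mod c * q, n)"
proof -
  obtain a b where "f - g = smult (int q) a + (monom 1 n - 1) * b"
    using assms unfolding cong_cyclic_def by blast
  then have "smult (int c) f - smult (int c) g = smult (int (c * q)) a + (monom 1 n - 1) * smult (int c) b"
    by (simp flip: smult_diff_right add: smult_add_right)
  then show ?thesis unfolding cong_cyclic_def by blast
qed

lemma cong_cyclic_smult_multiple: "int q dvd c \<Longrightarrow> [smult c f = 0] (mod q, n)"
  unfolding cong_cyclic_def by (intro exI[of _ "smult (c div int q) f"] exI[of _ 0]) simp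

lemma cong_cyclic_monom_shift: "[monom c (i + n * t) = monom c i] (mod q, n)"
proof -
  have "monom c (i + n * t) - monom c i = monom c i * (monom 1 n ^ t - 1)"
    by (simp add: monom_power mult_monom algebra_simps)
  also have "\<dots> = (monom 1 n - 1) * (monom c i * (\<Sum>j<t. monom 1 n ^ j))"
    by (simp add: power_diff_1_eq)
  finally show ?thesis unfolding cong_cyclic_def by (metis smult_0_right add_0)
qed

lemma cong_cyclic_pow_prime:
  assumes "prime p" and "p dvd q" and "[f = g] (mod q, n)"
  shows "[f ^ p = g ^ p] (mod p * q, n)"
proof -
  have "p * q dvd q ^ p"
  proof -
    have "p ^ 1 dvd q ^ (p - 1)"
      using assms(2) prime_ge_2_nat[OF assms(1)] by (intro dvd_power_le) auto
    then have "p * q dvd q ^ (p - 1) * q" by simp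
    then show ?thesis
      using prime_ge_2_nat[OF assms(1)] by (simp flip: power_Suc2)
  qed
  then have dvd: "int (p * q) dvd int q ^ p"
    by (metis int_dvd_int_iff of_nat_power)
  obtain h where "[f = g + smult (int q) h] (mod 0, n)"
    using assms(3) cong_cyclic_iff_exact[of f g q n] by blast
  then have "[f ^ p = (g + smult (int q) h) ^ p] (mod p * q, n)"
    by (rule cong_cyclic_0_imp[OF cong_cyclic_pow])
  also have "(g + smult (int q) h) ^ p = (g + [:int q:] * h) ^ p"
    by simp
  also obtain r where "(g + [:int q:] * h) ^ p = g ^ p + of_nat p * [:int q:] * g ^ (p - 1) * h
      + of_nat p * [:int q:]\<^sup>2 * r + [:int q:] ^ p * h ^ p"
    using power_add_mult_prime[OF assms(1), of g "[:int q:]" h] by (elim exE)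
  also have "\<dots> = g ^ p + smult (int p * int q) (g ^ (p - 1) * h)
      + smult (int p * (int q)\<^sup>2) r + smult (int q ^ p) (h ^ p)"
    by (simp add: of_nat_poly poly_const_pow mult_ac)
  also have "[\<dots> = g ^ p + 0 + 0 + 0] (mod p * q, n)"
    using dvd by (intro cong_cyclic_add cong_cyclic_refl cong_cyclic_smult_multiple)
      (simp_all add: power2_eq_square)
  finally show ?thesis by simp
qed

lemma cong_cyclic_pow_prime_exact:
  assumes "prime p" and "3 \<le> p" and "[f = g + smult (int (p ^ (j + 1))) h] (mod 0, n)"
  shows "[f ^ p = g ^ p + smult (int (p ^ (j + 2))) (g ^ (p - 1) * h)] (mod p ^ (j + 3), n)"
proof -
  let ?t = "int (p ^ (j + 1))"
  have "int p * ?t\<^sup>2 = int p ^ (j + 3) * int p ^ j"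
    by (simp add: power_add power2_eq_square power3_eq_cube mult_ac)
  then have dvd1: "int (p ^ (j + 3)) dvd int p * ?t\<^sup>2"
    by simp
  have "(j + 1) * 3 \<le> (j + 1) * p"
    using assms(2) by (rule mult_le_mono2)
  then have "int p ^ (j + 3) dvd int p ^ ((j + 1) * p)"
    by (intro le_imp_power_dvd) simp
  then have dvd2: "int (p ^ (j + 3)) dvd ?t ^ p"
    by (simp only: of_nat_power power_mult)
  have "[f ^ p = (g + smult ?t h) ^ p] (mod p ^ (j + 3), n)"
    using assms(3) by (rule cong_cyclic_0_imp[OF cong_cyclic_pow])
  also have "(g + smult ?t h) ^ p = (g + [:?t:] * h) ^ p"
    by simp
  also obtain r where "(g + [:?t:] * h) ^ p = g ^ p + of_nat p * [:?t:] * g ^ (p - 1) * h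
      + of_nat p * [:?t:]\<^sup>2 * r + [:?t:] ^ p * h ^ p"
    using power_add_mult_prime[OF assms(1), of g "[:?t:]" h] by (elim exE)
  also have "\<dots> = g ^ p + smult (int (p ^ (j + 2))) (g ^ (p - 1) * h)
      + smult (int p * ?t\<^sup>2) r + smult (?t ^ p) (h ^ p)"
    by (simp add: of_nat_poly poly_const_pow mult_ac)
  also have "[\<dots> = g ^ p + smult (int (p ^ (j + 2))) (g ^ (p - 1) * h) + 0 + 0] (mod p ^ (j + 3), n)"
    using dvd1 dvd2 by (intro cong_cyclic_add cong_cyclic_refl cong_cyclic_smult_multiple)
  finally show ?thesis by simp
qed

definition cyclic_reduce :: "nat \<Rightarrow> int poly \<Rightarrow> int poly" where
  "cyclic_reduce n f = (\<Sum>i\<le>degree f. monom (coeff f i) (i mod n))"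

lemma cyclic_reduce_eq_sum:
  "degree f \<le> D \<Longrightarrow> cyclic_reduce n f = (\<Sum>i\<le>D. monom (coeff f i) (i mod n))"
  unfolding cyclic_reduce_def by (rule sum.mono_neutral_left) (auto simp: coeff_eq_0)

lemma cyclic_reduce_add: "cyclic_reduce n (f + g) = cyclic_reduce n f + cyclic_reduce n g"
proof -
  let ?D = "max (degree f) (degree g)"
  have "cyclic_reduce n (f + g) = (\<Sum>i\<le>?D. monom (coeff (f + g) i) (i mod n))"
    by (rule cyclic_reduce_eq_sum) (simp add: degree_add_le)
  also have "\<dots> = cyclic_reduce n f + cyclic_reduce n g"
    by (simp add: cyclic_reduce_eq_sum[of _ ?D] add_monom[symmetric] sum.distrib)
  finally show ?thesis .
qed

lemma cyclic_reduce_smult: "cyclic_reduce n (smult c f) = smult c (cyclic_reduce n f)"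
proof -
  have smult_sum: "smult c (\<Sum>i\<in>A. h i) = (\<Sum>i\<in>A. smult c (h i))" for A and h :: "nat \<Rightarrow> int poly"
    by (induction A rule: infinite_finite_induct) (simp_all add: smult_add_right)
  have "cyclic_reduce n (smult c f) = (\<Sum>i\<le>degree f. monom (coeff (smult c f) i) (i mod n))"
    by (rule cyclic_reduce_eq_sum) simp
  then show ?thesis
    by (simp add: cyclic_reduce_def smult_sum smult_monom)
qed

lemma cyclic_reduce_diff: "cyclic_reduce n (f - g) = cyclic_reduce n f - cyclic_reduce n g"
  using cyclic_reduce_add[of n f "- g"] cyclic_reduce_smult[of n "- 1" g] by simp

lemma cyclic_reduce_0 [simp]: "cyclic_reduce n 0 = 0"
  by (simp add: cyclic_reduce_def)

lemma cyclic_reduce_sum: "cyclic_reduce n (\<Sum>i\<in>A. f i) = (\<Sum>i\<in>A. cyclic_reduce n (f i))"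
  by (induction A rule: infinite_finite_induct) (simp_all add: cyclic_reduce_add)

lemma cyclic_reduce_monom: "cyclic_reduce n (monom c i) = monom c (i mod n)"
proof -
  have "cyclic_reduce n (monom c i) = (\<Sum>j\<le>i. monom (coeff (monom c i) j) (j mod n))"
    by (rule cyclic_reduce_eq_sum) (simp add: degree_monom_le)
  also have "\<dots> = (\<Sum>j\<le>i. if j = i then monom c (i mod n) else 0)"
    by (rule sum.cong) (auto simp: coeff_monom)
  finally show ?thesis by simp
qed

lemma cyclic_reduce_monom_mult:
  "cyclic_reduce n (monom 1 k * f) = (\<Sum>i\<le>degree f. monom (coeff f i) ((k + i) mod n))"
proof -
  have "monom 1 k * f = (\<Sum>i\<le>degree f. monom (coeff f i) (k + i))"
    by (subst (1) poly_as_sum_of_monoms[symmetric]) (simp add: sum_distrib_left mult_monom)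
  then show ?thesis by (simp add: cyclic_reduce_sum cyclic_reduce_monom)
qed

lemma cyclic_reduce_cyclic_multiple: "cyclic_reduce n ((monom 1 n - 1) * b) = 0"
proof -
  have "cyclic_reduce n (monom 1 n * b) = cyclic_reduce n b"
    by (subst cyclic_reduce_monom_mult) (simp add: cyclic_reduce_def)
  then show ?thesis by (simp add: algebra_simps cyclic_reduce_diff)
qed

lemma coeff_cyclic_reduce:
  "coeff (cyclic_reduce n f) j = (\<Sum>i\<le>degree f. if i mod n = j then coeff f i else 0)"
  unfolding cyclic_reduce_def coeff_sum by (rule sum.cong) (auto simp: coeff_monom)

lemma coeff_cyclic_reduce_eq_0:
  assumes "0 < n" and "n \<le> j"
  shows "coeff (cyclic_reduce n f) j = 0"
proof -
  have "i mod n \<noteq> j" for i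
    using assms mod_less_divisor[of n i] by linarith
  then show ?thesis unfolding coeff_cyclic_reduce by simp
qed

lemma cong_cyclic_reduce:
  assumes "0 < n"
  shows "[cyclic_reduce n f = f] (mod 0, n)"
proof -
  have "[monom (coeff f i) (i mod n) = monom (coeff f i) i] (mod 0, n)" for i
    using cong_cyclic_sym[OF cong_cyclic_monom_shift[of "coeff f i" "i mod n" n "i div n" 0]]
    by simp
  then have "[cyclic_reduce n f = (\<Sum>i\<le>degree f. monom (coeff f i) i)] (mod 0, n)"
    unfolding cyclic_reduce_def by (intro cong_cyclic_sum)
  then show ?thesis by (simp add: poly_as_sum_of_monoms)
qed

lemma cong_cyclic_iff_coeff:
  assumes "0 < n"
  shows "[f = g] (mod q, n) \<longleftrightarrow> (\<forall>j. int q dvd coeff (cyclic_reduce n (f - g)) j)"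
proof
  assume "[f = g] (mod q, n)"
  then obtain a b where "f - g = smult (int q) a + (monom 1 n - 1) * b"
    unfolding cong_cyclic_def by blast
  then have "cyclic_reduce n (f - g) = smult (int q) (cyclic_reduce n a)"
    by (simp add: cyclic_reduce_add cyclic_reduce_smult cyclic_reduce_cyclic_multiple)
  then show "\<forall>j. int q dvd coeff (cyclic_reduce n (f - g)) j" by simp
next
  assume dvd: "\<forall>j. int q dvd coeff (cyclic_reduce n (f - g)) j"
  define a where "a = map_poly (\<lambda>c. c div int q) (cyclic_reduce n (f - g))"
  have "cyclic_reduce n (f - g) = smult (int q) a"
    by (rule poly_eqI) (use dvd in \<open>auto simp: a_def coeff_map_poly\<close>)
  moreover obtain b where "f - g - cyclic_reduce n (f - g) = (monom 1 n - 1) * b"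
    using cong_cyclic_reduce[OF assms, of "f - g"] cong_cyclic_sym unfolding cong_cyclic_def by fastforce
  ultimately have "f - g = smult (int q) a + (monom 1 n - 1) * b"
    by (simp add: algebra_simps)
  then show "[f = g] (mod q, n)" unfolding cong_cyclic_def by blast
qed

lemma cong_cyclic_smult_cancel_coprime:
  assumes "0 < n" and "coprime c (int q)" and "[smult c f = smult c g] (mod q, n)"
  shows "[f = g] (mod q, n)"
  using assms by (auto simp: cong_cyclic_iff_coeff cyclic_reduce_smult coprime_dvd_mult_right_iff
    coprime_commute simp flip: smult_diff_right)

lemma cong_cyclic_smult_cancel:
  assumes "0 < n" and "0 < c" and "[smult (int c) f = smult (int c) g] (mod c * q, n)"
  shows "[f = g] (mod q, n)"
  using assms by (auto simp: cong_cyclic_iff_coeff cyclic_reduce_smult simp flip: smult_diff_right)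

lemma cong_cyclic_pow_cancel_unit:
  assumes "0 < n" and "[a * b = [:c:]] (mod q, n)" and "coprime c (int q)"
    and "[a ^ (M + L) = a ^ M] (mod q, n)"
  shows "[a ^ L = 1] (mod q, n)"
proof -
  have unit: "[(a * b) ^ M = [:c ^ M:]] (mod q, n)"
    using cong_cyclic_pow[OF assms(2), of M] by (simp add: poly_const_pow)
  have "[[:c ^ M:] * a ^ L = (a * b) ^ M * a ^ L] (mod q, n)"
    using cong_cyclic_mult[OF cong_cyclic_sym[OF unit] cong_cyclic_refl] .
  also have "(a * b) ^ M * a ^ L = b ^ M * a ^ (M + L)"
    by (simp add: power_add power_mult_distrib mult_ac)
  also have "[b ^ M * a ^ (M + L) = b ^ M * a ^ M] (mod q, n)"
    using assms(4) by (rule cong_cyclic_mult[OF cong_cyclic_refl])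
  also have "b ^ M * a ^ M = (a * b) ^ M * 1"
    by (simp add: power_mult_distrib)
  also have "[(a * b) ^ M * 1 = [:c ^ M:] * 1] (mod q, n)"
    using unit by (rule cong_cyclic_mult[OF _ cong_cyclic_refl])
  finally have "[smult (c ^ M) (a ^ L) = smult (c ^ M) 1] (mod q, n)"
    by simp
  moreover have "coprime (c ^ M) (int q)"
    using assms(3) by simp
  ultimately show ?thesis
    using cong_cyclic_smult_cancel_coprime[OF assms(1)] by blast
qed

lemma cong_cyclic_poly_one:
  assumes "[f = g] (mod q, n)"
  shows "[poly f 1 = poly g 1] (mod int q)"
proof -
  obtain a b where "f - g = smult (int q) a + (monom 1 n - 1) * b"
    using assms unfolding cong_cyclic_def by blast
  then have "poly (f - g) 1 = int q * poly a 1"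
    by (simp add: poly_monom)
  then show ?thesis by (simp add: cong_iff_dvd_diff)
qed

section \<open>Eventual periods of powers\<close>

definition is_pow_period :: "nat \<Rightarrow> nat \<Rightarrow> int poly \<Rightarrow> nat \<Rightarrow> bool" where
  "is_pow_period q n u P \<longleftrightarrow> 0 < P \<and> (\<exists>N. [u ^ (N + P) = u ^ N] (mod q, n))"

definition pow_period :: "nat \<Rightarrow> nat \<Rightarrow> int poly \<Rightarrow> nat" where
  "pow_period q n u = (LEAST P. is_pow_period q n u P)"

lemma cong_cyclic_pow_shift:
  assumes "[u ^ (N + P) = u ^ N] (mod q, n)" and "N \<le> k"
  shows "[u ^ (k + c * P) = u ^ k] (mod q, n)"
proof (induction c)
  case (Suc c)
  have "[u ^ (k + c * P - N) * u ^ (N + P) = u ^ (k + c * P - N) * u ^ N] (mod q, n)"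
    by (rule cong_cyclic_mult[OF cong_cyclic_refl assms(1)])
  then have "[u ^ (k + Suc c * P) = u ^ (k + c * P)] (mod q, n)"
    using assms(2) by (simp flip: power_add add: algebra_simps)
  then show ?case
    using Suc.IH by (rule cong_cyclic_trans)
qed simp

lemma is_pow_period_dvd:
  assumes "is_pow_period q n u P" and "P dvd P'" and "0 < P'"
  shows "is_pow_period q n u P'"
proof -
  obtain c where c: "P' = c * P"
    using assms(2) by (metis dvdE mult.commute)
  obtain N where "[u ^ (N + P) = u ^ N] (mod q, n)"
    using assms(1) unfolding is_pow_period_def by blast
  then have "[u ^ (N + c * P) = u ^ N] (mod q, n)"
    by (rule cong_cyclic_pow_shift) simp
  then show ?thesis
    using assms(3) unfolding is_pow_period_def c by blast
qed

lemma is_pow_period_dvd_modulus: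
  "is_pow_period q n u P \<Longrightarrow> q' dvd q \<Longrightarrow> is_pow_period q' n u P"
  unfolding is_pow_period_def using cong_cyclic_dvd_modulus by blast

lemma is_pow_period_pow_period: "is_pow_period q n u P \<Longrightarrow> is_pow_period q n u (pow_period q n u)"
  unfolding pow_period_def by (rule LeastI)

lemma pow_period_dvd:
  assumes "is_pow_period q n u P"
  shows "pow_period q n u dvd P"
proof -
  define L where "L = pow_period q n u"
  have L: "is_pow_period q n u L"
    unfolding L_def using assms by (rule is_pow_period_pow_period)
  obtain N1 N2 where N1: "[u ^ (N1 + P) = u ^ N1] (mod q, n)" and N2: "[u ^ (N2 + L) = u ^ N2] (mod q, n)"
    using assms L unfolding is_pow_period_def by blast
  define N where "N = N1 + N2"
  have "[u ^ (N + P mod L) = u ^ (N + P mod L + (P div L) * L)] (mod q, n)"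
    by (rule cong_cyclic_sym[OF cong_cyclic_pow_shift[OF N2]]) (simp add: N_def)
  also have "N + P mod L + (P div L) * L = N + 1 * P"
    by simp
  also have "[u ^ (N + 1 * P) = u ^ N] (mod q, n)"
    using N1 by (rule cong_cyclic_pow_shift) (simp add: N_def)
  finally have "[u ^ (N + P mod L) = u ^ N] (mod q, n)" .
  then have "P mod L = 0"
    using L not_less_Least[of "P mod L" "is_pow_period q n u"]
    unfolding L_def pow_period_def is_pow_period_def by auto
  then show ?thesis unfolding L_def by auto
qed

lemma is_pow_period_lift:
  assumes "prime p" and "p dvd q" and "is_pow_period q n u P"
  shows "is_pow_period (p * q) n u (p * P)"
proof -
  obtain N where N: "[u ^ (N + P) = u ^ N] (mod q, n)" and "0 < P"
    using assms(3) unfolding is_pow_period_def by blast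
  have "[(u ^ (N + P)) ^ p = (u ^ N) ^ p] (mod p * q, n)"
    using assms(1,2) N by (rule cong_cyclic_pow_prime)
  then have "[u ^ (N * p + p * P) = u ^ (N * p)] (mod p * q, n)"
    by (simp flip: power_mult add: algebra_simps)
  then show ?thesis
    using \<open>0 < P\<close> prime_gt_0_nat[OF assms(1)] unfolding is_pow_period_def by auto
qed

lemma is_pow_period_prime_power:
  assumes "prime p" and "is_pow_period p n u Q"
  shows "is_pow_period (p ^ (j + 1)) n u (p ^ j * Q)"
proof (induction j)
  case (Suc j)
  have "is_pow_period (p * p ^ (j + 1)) n u (p * (p ^ j * Q))"
    using assms(1) _ Suc by (rule is_pow_period_lift) simp
  then show ?case by (simp add: mult_ac)
qed (use assms(2) in simp)

lemma not_cong_cyclic_0_witness: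
  assumes "[u ^ (N + R) = u ^ N + smult (int q) H] (mod 0, n)" and "0 < R"
    and "\<not> is_pow_period (q * p) n u R"
  shows "\<not> [u ^ M * H = 0] (mod p, n)"
proof
  assume "[u ^ M * H = 0] (mod p, n)"
  then have zero: "[smult (int q) (u ^ M * H) = 0] (mod q * p, n)"
    using cong_cyclic_smult[of "u ^ M * H" 0 p n q] by simp
  have "[u ^ M * u ^ (N + R) = u ^ M * (u ^ N + smult (int q) H)] (mod 0, n)"
    using assms(1) by (rule cong_cyclic_mult[OF cong_cyclic_refl])
  then have "[u ^ (M + N + R) = u ^ (M + N) + smult (int q) (u ^ M * H)] (mod 0, n)"
    by (simp add: power_add algebra_simps)
  then have "[u ^ (M + N + R) = u ^ (M + N) + smult (int q) (u ^ M * H)] (mod q * p, n)"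
    by (rule cong_cyclic_0_imp)
  then have "[u ^ (M + N + R) = u ^ (M + N) + 0] (mod q * p, n)"
    using cong_cyclic_add[OF cong_cyclic_refl zero] by (rule cong_cyclic_trans)
  then show False
    using assms(2,3) unfolding is_pow_period_def by auto
qed

lemma not_is_pow_period_lift:
  assumes "prime p" and "3 \<le> p" and "0 < n"
    and "is_pow_period (p ^ (j + 1)) n u R" and "\<not> is_pow_period (p ^ (j + 2)) n u R"
  shows "\<not> is_pow_period (p ^ (j + 3)) n u (p * R)"
proof
  obtain N where "[u ^ (N + R) = u ^ N] (mod p ^ (j + 1), n)"
    using assms(4) unfolding is_pow_period_def by blast
  then obtain H where H: "[u ^ (N + R) = u ^ N + smult (int (p ^ (j + 1))) H] (mod 0, n)"
    using cong_cyclic_iff_exact[of "u ^ (N + R)" "u ^ N" "p ^ (j + 1)" n] by blast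
  have H_nonzero: "\<not> [u ^ M * H = 0] (mod p, n)" for M
  proof (rule not_cong_cyclic_0_witness[OF H])
    show "0 < R"
      using assms(4) by (simp add: is_pow_period_def)
    show "\<not> is_pow_period (p ^ (j + 1) * p) n u R"
      using assms(5) by (simp add: mult_ac)
  qed
  assume "is_pow_period (p ^ (j + 3)) n u (p * R)"
  then obtain M where "[u ^ (M + p * R) = u ^ M] (mod p ^ (j + 3), n)"
    unfolding is_pow_period_def by blast
  then have "[u ^ (N * p) * u ^ (M + p * R) = u ^ (N * p) * u ^ M] (mod p ^ (j + 3), n)"
    by (rule cong_cyclic_mult[OF cong_cyclic_refl])
  then have per: "[u ^ M * (u ^ (N + R)) ^ p = u ^ M * (u ^ N) ^ p] (mod p ^ (j + 3), n)"
    by (simp flip: power_mult power_add add: algebra_simps)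
  have expand: "[(u ^ (N + R)) ^ p = (u ^ N) ^ p + smult (int (p ^ (j + 2))) ((u ^ N) ^ (p - 1) * H)]
      (mod p ^ (j + 3), n)"
    using assms(1,2) H by (rule cong_cyclic_pow_prime_exact)
  have "[u ^ M * ((u ^ N) ^ p + smult (int (p ^ (j + 2))) ((u ^ N) ^ (p - 1) * H))
      = u ^ M * (u ^ N) ^ p] (mod p ^ (j + 3), n)"
    using cong_cyclic_mult[OF cong_cyclic_refl cong_cyclic_sym[OF expand]] per by (rule cong_cyclic_trans)
  then have "[u ^ M * (u ^ N) ^ p + smult (int (p ^ (j + 2))) (u ^ M * (u ^ N) ^ (p - 1) * H)
      = u ^ M * (u ^ N) ^ p] (mod p ^ (j + 3), n)"
    by (simp add: distrib_left mult.assoc)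
  from cong_cyclic_diff[OF this cong_cyclic_refl[of "u ^ M * (u ^ N) ^ p"]]
  have zero: "[smult (int (p ^ (j + 2))) (u ^ M * (u ^ N) ^ (p - 1) * H) = smult (int (p ^ (j + 2))) 0]
      (mod p ^ (j + 2) * p, n)"
    by (simp add: power_add power3_eq_cube mult_ac)
  have "[u ^ M * (u ^ N) ^ (p - 1) * H = 0] (mod p, n)"
    using prime_gt_0_nat[OF assms(1)] by (intro cong_cyclic_smult_cancel[OF assms(3) _ zero]) simp
  then show False using H_nonzero[of "M + N * (p - 1)"] by (simp add: power_add power_mult)
qed

lemma not_is_pow_period_prime_power:
  assumes "prime p" and "3 \<le> p" and "0 < n"
    and "is_pow_period p n u Q" and "\<not> is_pow_period (p\<^sup>2) n u Q"
  shows "\<not> is_pow_period (p ^ (j + 2)) n u (p ^ j * Q)"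
proof (induction j)
  case (Suc j)
  have "\<not> is_pow_period (p ^ (j + 3)) n u (p * (p ^ j * Q))"
    using assms(1-3) is_pow_period_prime_power[OF assms(1,4)] Suc by (rule not_is_pow_period_lift)
  then show ?case by (simp add: mult_ac numeral_3_eq_3)
qed (use assms(5) in \<open>simp add: power2_eq_square\<close>)

lemma pow_period_prime_power:
  assumes "prime p" and "3 \<le> p" and "0 < n" and "0 < k" and "is_pow_period p n u P"
    and "\<not> is_pow_period (p\<^sup>2) n u (pow_period p n u)"
  shows "pow_period (p ^ k) n u = p ^ (k - 1) * pow_period p n u"
proof -
  define Q where "Q = pow_period p n u"
  define R where "R = pow_period (p ^ k) n u"
  have Q: "is_pow_period p n u Q"
    unfolding Q_def using assms(5) by (rule is_pow_period_pow_period)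
  have kQ: "is_pow_period (p ^ k) n u (p ^ (k - 1) * Q)"
    using is_pow_period_prime_power[OF assms(1) Q, of "k - 1"] assms(4) by simp
  then have R: "is_pow_period (p ^ k) n u R"
    unfolding R_def by (rule is_pow_period_pow_period)
  have "R dvd p ^ (k - 1) * Q"
    unfolding R_def using kQ by (rule pow_period_dvd)
  have "is_pow_period p n u R"
    using assms(4) by (intro is_pow_period_dvd_modulus[OF R]) simp
  then have "Q dvd R"
    unfolding Q_def by (rule pow_period_dvd)
  then obtain x where x: "R = Q * x" ..
  with \<open>R dvd p ^ (k - 1) * Q\<close> have "x dvd p ^ (k - 1)"
    using Q by (simp add: is_pow_period_def mult.commute)
  then obtain i where i: "i \<le> k - 1" "x = p ^ i"
    using divides_primepow_nat[OF assms(1)] by blast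
  have "i = k - 1"
  proof (rule ccontr)
    assume "i \<noteq> k - 1"
    define j where "j = k - 2"
    have j: "k = j + 2" "i \<le> j"
      using i(1) \<open>i \<noteq> k - 1\<close> unfolding j_def by auto
    have "R dvd p ^ j * Q"
      using j(2) by (simp add: x i(2) le_imp_power_dvd)
    then have "is_pow_period (p ^ k) n u (p ^ j * Q)"
      by (rule is_pow_period_dvd[OF R])
        (use Q prime_gt_0_nat[OF assms(1)] in \<open>simp add: is_pow_period_def\<close>)
    then show False
      using not_is_pow_period_prime_power[OF assms(1-3) Q, of j] assms(6) j(1)
      unfolding Q_def by simp
  qed
  then have "R = p ^ (k - 1) * Q"
    using x i by simp
  then show ?thesis unfolding R_def Q_def .
qed

section \<open>Ducci sequences as powers of $1 + x^{n-1}$\<close>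

definition ducci :: "nat \<Rightarrow> int poly" where
  "ducci n = 1 + monom 1 (n - 1)"

definition residue_vec :: "nat \<Rightarrow> nat \<Rightarrow> int poly \<Rightarrow> nat \<Rightarrow> nat" where
  "residue_vec m n f = (\<lambda>i. if i < n then nat (coeff (cyclic_reduce n f) i mod int m) else 0)"

lemma coeff_cyclic_reduce_ducci_mult:
  assumes "0 < n" and "i < n"
  shows "coeff (cyclic_reduce n (ducci n * f)) i =
    coeff (cyclic_reduce n f) i + coeff (cyclic_reduce n f) ((i + 1) mod n)"
proof -
  have shift: "(n - 1 + l) mod n = i \<longleftrightarrow> l mod n = (i + 1) mod n" for l
  proof -
    have "(n - 1 + l) mod n = i \<longleftrightarrow> [n - 1 + l = i] (mod n)"
      using assms(2) by (simp add: cong_def)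
    also have "\<dots> \<longleftrightarrow> [n - 1 + l + 1 = i + 1] (mod n)"
      by (simp only: cong_add_rcancel_nat)
    also have "n - 1 + l + 1 = l + n"
      using assms(1) by simp
    finally show ?thesis by (simp add: cong_def)
  qed
  have "coeff (cyclic_reduce n (monom 1 (n - 1) * f)) i =
      (\<Sum>l\<le>degree f. if (n - 1 + l) mod n = i then coeff f l else 0)"
    unfolding cyclic_reduce_monom_mult coeff_sum by (rule sum.cong) (auto simp: coeff_monom)
  also have "\<dots> = (\<Sum>l\<le>degree f. if l mod n = (i + 1) mod n then coeff f l else 0)"
    by (simp only: shift)
  finally show ?thesis
    by (simp add: ducci_def distrib_right cyclic_reduce_add coeff_cyclic_reduce)
qed

lemma Tmap_residue_vec:
  assumes "0 < m" and "0 < n"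
  shows "Tmap m n (residue_vec m n f) = residue_vec m n (ducci n * f)"
proof
  fix i
  have "(nat (x mod int m) + nat (y mod int m)) mod m = nat ((x + y) mod int m)" for x y
  proof -
    have "int ((nat (x mod int m) + nat (y mod int m)) mod m) = (x mod int m + y mod int m) mod int m"
      using assms(1) by (simp add: of_nat_mod)
    then show ?thesis by (simp add: mod_add_eq)
  qed
  then show "Tmap m n (residue_vec m n f) i = residue_vec m n (ducci n * f) i"
    using assms by (simp add: Tmap_def residue_vec_def coeff_cyclic_reduce_ducci_mult)
qed

lemma Tmap_iter_residue_vec:
  "0 < m \<Longrightarrow> 0 < n \<Longrightarrow> (Tmap m n ^^ k) (residue_vec m n f) = residue_vec m n (ducci n ^ k * f)"
  by (induction k) (simp_all add: Tmap_residue_vec mult.assoc)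

lemma residue_vec_eq_iff:
  assumes "0 < m" and "0 < n"
  shows "residue_vec m n f = residue_vec m n g \<longleftrightarrow> [f = g] (mod m, n)"
proof -
  have "residue_vec m n f = residue_vec m n g \<longleftrightarrow>
      (\<forall>i<n. [coeff (cyclic_reduce n f) i = coeff (cyclic_reduce n g) i] (mod int m))"
    using assms(1) by (auto simp: residue_vec_def fun_eq_iff cong_def nat_eq_iff2)
  also have "\<dots> \<longleftrightarrow> (\<forall>i. int m dvd coeff (cyclic_reduce n (f - g)) i)"
    using assms(2) by (metis cong_iff_dvd_diff coeff_diff cyclic_reduce_diff coeff_cyclic_reduce_eq_0
      dvd_0_right not_le)
  finally show ?thesis using cong_cyclic_iff_coeff[OF assms(2)] by simp
qed

lemma residue_vec_in_vecs: "0 < m \<Longrightarrow> residue_vec m n f \<in> vecs m n"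
  by (auto simp: vecs_def residue_vec_def nat_less_iff)

lemma residue_vec_surj:
  assumes "a \<in> vecs m n"
  shows "\<exists>f. residue_vec m n f = a"
proof
  define f where "f = (\<Sum>i<n. monom (int (a i)) i)"
  have "cyclic_reduce n f = f"
    by (simp add: f_def cyclic_reduce_sum cyclic_reduce_monom)
  moreover have "coeff f j = (if j < n then int (a j) else 0)" for j
    by (simp add: f_def coeff_sum coeff_monom)
  ultimately show "residue_vec m n f = a"
    using assms by (auto simp: residue_vec_def vecs_def)
qed

lemma finite_vecs: "finite (vecs m n)"
proof -
  have "vecs m n = {a. \<forall>x. (x \<in> {..<n} \<longrightarrow> a x \<in> {..<m}) \<and> (x \<notin> {..<n} \<longrightarrow> a x = 0)}"
    unfolding vecs_def by auto
  then show ?thesis using finite_set_of_finite_funs[of "{..<n}" "{..<m}" 0] by simp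
qed

lemma residue_vec_eventually_periodic:
  assumes "0 < m" and "0 < n" and "is_pow_period m n (ducci n) P"
  shows "\<exists>N. \<forall>k\<ge>N. (Tmap m n ^^ (k + P)) (residue_vec m n f) = (Tmap m n ^^ k) (residue_vec m n f)"
proof -
  obtain N where N: "[ducci n ^ (N + P) = ducci n ^ N] (mod m, n)"
    using assms(3) unfolding is_pow_period_def by blast
  have "(Tmap m n ^^ (k + P)) (residue_vec m n f) = (Tmap m n ^^ k) (residue_vec m n f)"
    if "N \<le> k" for k
  proof -
    have "[ducci n ^ (k + 1 * P) = ducci n ^ k] (mod m, n)"
      using N that by (rule cong_cyclic_pow_shift)
    then have "[ducci n ^ (k + P) * f = ducci n ^ k * f] (mod m, n)"
      by (simp add: cong_cyclic_mult)
    then show ?thesis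
      using assms(1,2) by (simp add: Tmap_iter_residue_vec residue_vec_eq_iff)
  qed
  then show ?thesis by blast
qed

lemma is_pow_period_if_eventually_periodic:
  assumes "0 < m" and "0 < n" and "0 < P"
    and "\<forall>k\<ge>N. (Tmap m n ^^ (k + P)) (residue_vec m n 1) = (Tmap m n ^^ k) (residue_vec m n 1)"
  shows "is_pow_period m n (ducci n) P"
  using assms(4)[rule_format, of N] assms(1-3)
  by (auto simp: is_pow_period_def Tmap_iter_residue_vec residue_vec_eq_iff)

lemma Pmax_eq_pow_period:
  assumes "0 < m" and "0 < n" and "is_pow_period m n (ducci n) P"
  shows "Pmax m n = pow_period m n (ducci n)"
proof -
  define Q where "Q = pow_period m n (ducci n)"
  have Q: "is_pow_period m n (ducci n) Q"
    unfolding Q_def using assms(3) by (rule is_pow_period_pow_period)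
  have le: "cycle_len m n a \<le> Q" if a: "a \<in> vecs m n" for a
  proof -
    obtain f where "residue_vec m n f = a"
      using residue_vec_surj[OF a] by blast
    then have "0 < Q \<and> (\<exists>N. \<forall>k\<ge>N. (Tmap m n ^^ (k + Q)) a = (Tmap m n ^^ k) a)"
      using residue_vec_eventually_periodic[OF assms(1,2) Q, of f] Q by (auto simp: is_pow_period_def)
    then show ?thesis
      unfolding cycle_len_def by (rule Least_le)
  qed
  let ?a = "residue_vec m n 1"
  have "0 < cycle_len m n ?a \<and>
      (\<exists>N. \<forall>k\<ge>N. (Tmap m n ^^ (k + cycle_len m n ?a)) ?a = (Tmap m n ^^ k) ?a)"
  proof -
    have "0 < Q \<and> (\<exists>N. \<forall>k\<ge>N. (Tmap m n ^^ (k + Q)) ?a = (Tmap m n ^^ k) ?a)"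
      using residue_vec_eventually_periodic[OF assms(1,2) Q] Q by (auto simp: is_pow_period_def)
    then show ?thesis
      unfolding cycle_len_def by (rule LeastI)
  qed
  then have "is_pow_period m n (ducci n) (cycle_len m n ?a)"
    using is_pow_period_if_eventually_periodic[OF assms(1,2)] by blast
  then have "Q \<le> cycle_len m n ?a"
    unfolding Q_def pow_period_def by (rule Least_le)
  then have "Q \<in> cycle_len m n ` vecs m n"
    using le[OF residue_vec_in_vecs[OF assms(1)]] residue_vec_in_vecs[OF assms(1)]
    by (metis image_eqI le_antisym)
  then show ?thesis
    unfolding Pmax_def Q_def[symmetric] using le finite_vecs by (intro Max_eqI) auto
qed

definition frobenius_rest :: "nat \<Rightarrow> nat \<Rightarrow> int poly" where
  "frobenius_rest p b = (\<Sum>k\<in>{1..<p}. monom (int ((p choose k) div p)) (b * k))"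

lemma one_plus_monom_pow_prime:
  assumes "prime p"
  shows "(1 + monom 1 b) ^ p = 1 + monom 1 (b * p) + smult (int p) (frobenius_rest p b)"
proof -
  from binomial_ring_prime[OF assms, of "monom 1 b" 1]
  show ?thesis
    by (simp add: frobenius_rest_def monom_power of_nat_poly smult_monom mult.commute add_ac)
qed

lemma cong_cyclic_one_plus_monom_pow:
  assumes "prime p"
  shows "[(1 + monom 1 b) ^ (p ^ j) = 1 + monom 1 (b * p ^ j)] (mod p, n)"
proof (induction j)
  case (Suc j)
  have "(1 + monom 1 b) ^ (p ^ Suc j) = ((1 + monom 1 b) ^ (p ^ j)) ^ p"
    by (simp only: power_Suc2 power_mult)
  also have "[\<dots> = (1 + monom 1 (b * p ^ j)) ^ p] (mod p, n)"
    using Suc by (rule cong_cyclic_pow)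
  also have "(1 + monom 1 (b * p ^ j)) ^ p =
      1 + monom 1 (b * p ^ Suc j) + smult (int p) (frobenius_rest p (b * p ^ j))"
    by (simp add: one_plus_monom_pow_prime[OF assms] mult_ac)
  also have "[\<dots> = 1 + monom 1 (b * p ^ Suc j) + 0] (mod p, n)"
    by (intro cong_cyclic_add cong_cyclic_refl cong_cyclic_smult_multiple) simp
  finally show ?case by simp
qed simp

lemma is_pow_period_ducci_prime:
  assumes "prime p" and "n = p ^ e * m" and "\<not> p dvd m" and "0 < n"
  shows "is_pow_period p n (ducci n) (p ^ e * (p ^ totient m - 1))"
proof -
  define r where "r = totient m"
  have "0 < r"
    using assms(2,4) by (simp add: r_def)
  then have "1 < p ^ r"
    by (rule one_less_power[OF prime_gt_1_nat[OF assms(1)]])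
  have "[p ^ r = 1] (mod m)"
    unfolding r_def using assms(1,3) by (intro euler_theorem) (simp add: prime_imp_coprime)
  then obtain c where c: "p ^ r = 1 + c * m"
    using \<open>1 < p ^ r\<close> unfolding cong_to_1'_nat by (metis less_numeral_extra(4) not_less_zero)
  have exponent: "(n - 1) * p ^ (e + r) = (n - 1) * p ^ e + n * ((n - 1) * c)"
    by (simp add: power_add c assms(2) algebra_simps)
  have "ducci n ^ (p ^ (e + r)) = (1 + monom 1 (n - 1)) ^ (p ^ (e + r))"
    by (simp add: ducci_def)
  also have "[\<dots> = 1 + monom 1 ((n - 1) * p ^ (e + r))] (mod p, n)"
    by (rule cong_cyclic_one_plus_monom_pow[OF assms(1)])
  also have "[1 + monom 1 ((n - 1) * p ^ (e + r)) = 1 + monom 1 ((n - 1) * p ^ e)] (mod p, n)"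
    unfolding exponent by (intro cong_cyclic_add cong_cyclic_refl cong_cyclic_monom_shift)
  also have "[1 + monom 1 ((n - 1) * p ^ e) = ducci n ^ (p ^ e)] (mod p, n)"
    unfolding ducci_def by (rule cong_cyclic_sym[OF cong_cyclic_one_plus_monom_pow[OF assms(1)]])
  finally have "[ducci n ^ (p ^ e + p ^ e * (p ^ r - 1)) = ducci n ^ (p ^ e)] (mod p, n)"
    using \<open>1 < p ^ r\<close> by (simp add: power_add algebra_simps)
  then show ?thesis
    using \<open>1 < p ^ r\<close> prime_gt_0_nat[OF assms(1)] unfolding is_pow_period_def r_def by auto
qed

section \<open>Periods modulo $p^2$\<close>

lemma wieferich_if_two_pow_cong_one:
  assumes "prime p" and "[2 ^ L = 1] (mod p\<^sup>2)" and "\<not> p dvd L"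
  shows "wieferich p"
proof -
  have "coprime (2 ^ L) (p\<^sup>2)"
    using coprime_cong_cong_left[OF assms(2)] by simp
  then have coprime: "coprime 2 (p\<^sup>2)"
    using assms(3) by (cases L) simp_all
  have "ord (p\<^sup>2) 2 dvd L"
    using assms(2) by (rule ord_divides[THEN iffD1])
  then have "coprime (ord (p\<^sup>2) 2) p"
    using assms(1,3) by (metis coprime_commute dvd_trans prime_imp_coprime)
  moreover have "[2 ^ (p * (p - 1)) = 1] (mod p\<^sup>2)"
    using euler_theorem[OF coprime] totient_prime_power[OF assms(1), of 2] by simp
  then have "ord (p\<^sup>2) 2 dvd (p - 1) * p"
    by (simp add: ord_divides[symmetric] mult.commute)
  ultimately have "ord (p\<^sup>2) 2 dvd p - 1"
    by (simp add: coprime_dvd_mult_left_iff)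
  then show ?thesis
    using assms(1) unfolding wieferich_def by (simp add: ord_divides[symmetric])
qed

lemma poly_ducci_one [simp]: "poly (ducci n) 1 = 2"
  by (simp add: ducci_def poly_monom)

lemma coprime_two_odd_prime:
  assumes "prime p" and "3 \<le> p"
  shows "coprime 2 (int p)"
  using prime_odd_nat[OF assms(1)] assms(2) by simp

lemma not_is_pow_period_ducci_sq:
  assumes "prime p" and "3 \<le> p" and "\<not> wieferich p" and "\<not> p dvd L"
  shows "\<not> is_pow_period (p\<^sup>2) n (ducci n) L"
proof
  assume "is_pow_period (p\<^sup>2) n (ducci n) L"
  then obtain M where "[ducci n ^ (M + L) = ducci n ^ M] (mod p\<^sup>2, n)"
    unfolding is_pow_period_def by blast
  then have "[2 ^ L * 2 ^ M = 1 * 2 ^ M] (mod int (p\<^sup>2))"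
    using cong_cyclic_poly_one by (fastforce simp: power_add mult.commute)
  moreover have "coprime (2 ^ M) (int (p\<^sup>2))"
    using coprime_two_odd_prime[OF assms(1,2)] by simp
  ultimately have "[2 ^ L = 1] (mod int (p\<^sup>2))"
    by (metis cong_mult_rcancel)
  then have "[2 ^ L = 1] (mod p\<^sup>2)"
    by (metis cong_int_iff of_nat_1 of_nat_numeral of_nat_power)
  then show False
    using wieferich_if_two_pow_cong_one assms(1,3,4) by blast
qed

lemma cong_cyclic_ducci_pow_prime_power:
  assumes "prime p" and "0 < e"
  shows "[ducci n ^ (p ^ e) = 2 + smult (int p) (frobenius_rest p ((n - 1) * p ^ (e - 1)))]
    (mod p\<^sup>2, p ^ e)"
proof -
  define b where "b = (n - 1) * p ^ (e - 1)"
  have pe: "p ^ (e - 1) * p = p ^ e"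
    using assms(2) by (cases e) simp_all
  have "ducci n ^ (p ^ e) = (ducci n ^ (p ^ (e - 1))) ^ p"
    by (simp flip: pe add: power_mult)
  also have "[(ducci n ^ (p ^ (e - 1))) ^ p = (1 + monom 1 b) ^ p] (mod p * p, p ^ e)"
    unfolding ducci_def b_def
    by (rule cong_cyclic_pow_prime[OF assms(1) dvd_refl cong_cyclic_one_plus_monom_pow[OF assms(1)]])
  also have "(1 + monom 1 b) ^ p = 1 + monom 1 (0 + p ^ e * (n - 1)) + smult (int p) (frobenius_rest p b)"
    by (simp add: one_plus_monom_pow_prime[OF assms(1)] b_def flip: pe) (simp add: mult_ac)
  also have "[1 + monom 1 (0 + p ^ e * (n - 1)) + smult (int p) (frobenius_rest p b) =
      1 + monom 1 0 + smult (int p) (frobenius_rest p b)] (mod p * p, p ^ e)"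
    by (intro cong_cyclic_add cong_cyclic_refl cong_cyclic_monom_shift)
  finally show ?thesis
    by (simp add: b_def power2_eq_square monom_eq_1 one_add_one)
qed

lemma coeff_cyclic_reduce_frobenius_rest:
  assumes "prime p" and "0 < e" and "\<not> p dvd s"
  shows "coeff (cyclic_reduce (p ^ e) (frobenius_rest p (s * p ^ (e - 1))))
    (s * p ^ (e - 1) mod p ^ e) = 1"
proof -
  define b where "b = s * p ^ (e - 1)"
  have pe: "p ^ e = p ^ (e - 1) * p"
    using assms(2) by (cases e) simp_all
  have same_residue: "b * k mod p ^ e = b mod p ^ e \<longleftrightarrow> k = 1" if k: "k \<in> {1..<p}" for k
  proof
    assume "b * k mod p ^ e = b mod p ^ e"
    then have "p ^ e dvd b * k - b"
      using k by (simp add: mod_eq_dvd_iff_nat)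
    moreover have "b * k - b = b * (k - 1)"
      by (simp add: diff_mult_distrib2)
    moreover have "b * (k - 1) = p ^ (e - 1) * (s * (k - 1))"
      by (simp add: b_def mult_ac)
    ultimately have "p ^ (e - 1) * p dvd p ^ (e - 1) * (s * (k - 1))"
      by (simp only: pe)
    then have "p dvd s * (k - 1)"
      using prime_gt_0_nat[OF assms(1)] by simp
    then have "p dvd k - 1"
      using assms(1,3) prime_dvd_mult_iff by blast
    then show "k = 1"
      using k by (auto dest: dvd_imp_le)
  qed simp
  have "coeff (cyclic_reduce (p ^ e) (frobenius_rest p b)) (b mod p ^ e) =
      (\<Sum>k\<in>{1..<p}. if b * k mod p ^ e = b mod p ^ e then int ((p choose k) div p) else 0)"
    unfolding frobenius_rest_def cyclic_reduce_sum cyclic_reduce_monom coeff_sum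
    by (rule sum.cong) (auto simp: coeff_monom)
  also have "\<dots> = (\<Sum>k\<in>{1..<p}. if k = 1 then 1 else 0)"
    by (rule sum.cong) (simp_all add: same_residue)
  finally show ?thesis
    using prime_ge_2_nat[OF assms(1)] by (simp add: b_def)
qed

lemma cong_cyclic_two_plus_smult_pow:
  "[(2 + smult (int p) G) ^ L = [:2 ^ L:] + smult (int L * int p * 2 ^ (L - 1)) G] (mod p\<^sup>2, n)"
proof -
  define c where "c = int L * int p * 2 ^ (L - 1)"
  obtain r where "(2 + [:int p:] * G) ^ L = 2 ^ L + of_nat L * [:int p:] * 2 ^ (L - 1) * G
      + [:int p:]\<^sup>2 * r"
    using power_add_mult_square[of 2 "[:int p:]" G L] by (elim exE)
  then have "(2 + smult (int p) G) ^ L = [:2 ^ L:] + smult c G + smult (int (p\<^sup>2)) r"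
    by (simp add: c_def of_nat_poly numeral_poly poly_const_pow mult_ac)
  also have "[[:2 ^ L:] + smult c G + smult (int (p\<^sup>2)) r = [:2 ^ L:] + smult c G + 0] (mod p\<^sup>2, n)"
    by (intro cong_cyclic_add cong_cyclic_refl cong_cyclic_smult_multiple) simp
  finally show ?thesis
    by (simp add: c_def)
qed

lemma mod_prime_power_ne_0:
  fixes p s :: nat
  assumes "0 < p" and "0 < e" and "\<not> p dvd s"
  shows "s * p ^ (e - 1) mod p ^ e \<noteq> 0"
proof
  assume "s * p ^ (e - 1) mod p ^ e = 0"
  moreover have "p ^ e = p ^ (e - 1) * p"
    using assms(2) by (cases e) simp_all
  ultimately have "p ^ (e - 1) * p dvd p ^ (e - 1) * s"
    by (metis mod_0_imp_dvd mult.commute)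
  then show False
    using assms(1,3) by simp
qed

lemma not_cong_cyclic_two_plus_frobenius_rest_pow:
  assumes "prime p" and "3 \<le> p" and "0 < e" and "\<not> p dvd s" and "\<not> p dvd L"
  shows "\<not> [(2 + smult (int p) (frobenius_rest p (s * p ^ (e - 1)))) ^ L = 1] (mod p\<^sup>2, p ^ e)"
proof
  define G where "G = frobenius_rest p (s * p ^ (e - 1))"
  define c where "c = int L * int p * 2 ^ (L - 1)"
  assume pow: "[(2 + smult (int p) G) ^ L = 1] (mod p\<^sup>2, p ^ e)"
  have "[[:2 ^ L:] + smult c G = (2 + smult (int p) G) ^ L] (mod p\<^sup>2, p ^ e)"
    unfolding c_def by (rule cong_cyclic_sym[OF cong_cyclic_two_plus_smult_pow])
  also note pow
  finally have "[[:2 ^ L:] + smult c G = 1] (mod p\<^sup>2, p ^ e)" .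
  then have "[[:2 ^ L:] + smult c G - 1 = 1 - 1] (mod p\<^sup>2, p ^ e)"
    by (rule cong_cyclic_diff[OF _ cong_cyclic_refl])
  moreover have "[:2 ^ L:] + smult c G - 1 = [:2 ^ L - 1:] + smult c G"
    by (simp add: one_pCons)
  ultimately have "[[:2 ^ L - 1:] + smult c G = 0] (mod p\<^sup>2, p ^ e)"
    by simp
  then have "int (p\<^sup>2) dvd coeff (cyclic_reduce (p ^ e) ([:2 ^ L - 1:] + smult c G)) (s * p ^ (e - 1) mod p ^ e)"
    using cong_cyclic_iff_coeff[of "p ^ e"] prime_gt_0_nat[OF assms(1)] by simp
  moreover have "coeff (cyclic_reduce (p ^ e) ([:2 ^ L - 1:] + smult c G)) (s * p ^ (e - 1) mod p ^ e) = c"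
    using coeff_cyclic_reduce_frobenius_rest[OF assms(1,3,4)]
      mod_prime_power_ne_0[OF prime_gt_0_nat[OF assms(1)] assms(3,4)]
    by (simp add: G_def cyclic_reduce_add cyclic_reduce_smult monom_0[symmetric] cyclic_reduce_monom
      coeff_monom)
  ultimately have "int p * int p dvd int p * (int L * 2 ^ (L - 1))"
    by (simp add: c_def power2_eq_square mult_ac)
  then have "int p dvd int L * 2 ^ (L - 1)"
    using prime_gt_0_nat[OF assms(1)] by simp
  moreover have "prime (int p)"
    using assms(1) by simp
  moreover have "\<not> int p dvd 2"
    using assms(2) by (auto dest: zdvd_imp_le)
  then have "\<not> int p dvd 2 ^ (L - 1)"
    using prime_dvd_power[OF \<open>prime (int p)\<close>] by blast
  ultimately show False
    using prime_dvd_mult_iff[OF \<open>prime (int p)\<close>] assms(5) by simp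
qed

lemma cong_cyclic_two_plus_smult_mult:
  "[(2 + smult (int p) G) * (2 - smult (int p) G) = [:4:]] (mod p\<^sup>2, n)"
proof -
  have "(2 + smult (int p) G) * (2 - smult (int p) G) = [:4:] - smult (int (p\<^sup>2)) (G * G)"
    by (simp add: algebra_simps power2_eq_square numeral_poly)
  moreover have "[[:4:] - smult (int (p\<^sup>2)) (G * G) = [:4:] - 0] (mod p\<^sup>2, n)"
    by (intro cong_cyclic_diff cong_cyclic_refl cong_cyclic_smult_multiple) simp
  ultimately show ?thesis by simp
qed

lemma not_is_pow_period_ducci_sq_dvd:
  assumes "prime p" and "3 \<le> p" and "0 < n" and "0 < e" and "p ^ e dvd n" and "\<not> p dvd L"
  shows "\<not> is_pow_period (p\<^sup>2) n (ducci n) (p ^ e * L)"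
proof
  define G where "G = frobenius_rest p ((n - 1) * p ^ (e - 1))"
  define A where "A = 2 + smult (int p) G"
  have wA: "[ducci n ^ (p ^ e) = A] (mod p\<^sup>2, p ^ e)"
    unfolding A_def G_def using assms(1,4) by (rule cong_cyclic_ducci_pow_prime_power)
  assume "is_pow_period (p\<^sup>2) n (ducci n) (p ^ e * L)"
  then obtain M where "[ducci n ^ (M + p ^ e * L) = ducci n ^ M] (mod p\<^sup>2, n)"
    unfolding is_pow_period_def by blast
  then have "[ducci n ^ (p ^ e * M + 1 * (p ^ e * L)) = ducci n ^ (p ^ e * M)] (mod p\<^sup>2, n)"
    by (rule cong_cyclic_pow_shift) (simp add: prime_gt_0_nat[OF assms(1)] Suc_le_eq)
  from cong_cyclic_dvd_degree[OF assms(5) this]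
  have period: "[(ducci n ^ (p ^ e)) ^ (M + L) = (ducci n ^ (p ^ e)) ^ M] (mod p\<^sup>2, p ^ e)"
    by (simp flip: power_mult add: distrib_left)
  have "[A ^ (M + L) = (ducci n ^ (p ^ e)) ^ (M + L)] (mod p\<^sup>2, p ^ e)"
    by (rule cong_cyclic_pow[OF cong_cyclic_sym[OF wA]])
  also note period
  also have "[(ducci n ^ (p ^ e)) ^ M = A ^ M] (mod p\<^sup>2, p ^ e)"
    by (rule cong_cyclic_pow[OF wA])
  finally have AML: "[A ^ (M + L) = A ^ M] (mod p\<^sup>2, p ^ e)" .
  have AB: "[A * (2 - smult (int p) G) = [:4:]] (mod p\<^sup>2, p ^ e)"
    unfolding A_def by (rule cong_cyclic_two_plus_smult_mult)
  have "coprime (2 ^ 2) (int p ^ 2)"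
    using coprime_two_odd_prime[OF assms(1,2)]
    by (simp only: coprime_power_left_iff coprime_power_right_iff) simp
  then have coprime: "coprime 4 (int (p\<^sup>2))"
    by simp
  have "[A ^ L = 1] (mod p\<^sup>2, p ^ e)"
    by (rule cong_cyclic_pow_cancel_unit[OF _ AB coprime AML]) (simp add: prime_gt_0_nat[OF assms(1)])
  moreover have "\<not> p dvd n - 1"
  proof
    assume "p dvd n - 1"
    moreover have "p dvd n"
      using assms(4,5) by (metis dvd_power dvd_trans)
    ultimately have "p dvd n - (n - 1)"
      by (rule dvd_diff_nat[rotated])
    then show False
      using assms(1,3) by simp
  qed
  ultimately show False
    using not_cong_cyclic_two_plus_frobenius_rest_pow[OF assms(1,2,4) _ assms(6)]
    unfolding A_def G_def by blast
qed

lemma pow_period_ducci_prime_not_sq: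
  assumes "prime p" and "3 \<le> p" and "\<not> wieferich p" and "0 < n"
  shows "is_pow_period p n (ducci n) (pow_period p n (ducci n)) \<and>
    \<not> is_pow_period (p\<^sup>2) n (ducci n) (pow_period p n (ducci n))"
proof -
  obtain e m where n: "n = p ^ e * m" and "\<not> p dvd m"
    using multiplicity_decompose'[of n p] assms(1,4) not_prime_unit by blast
  define L where "L = p ^ totient m - 1"
  have "\<not> p dvd L"
  proof
    assume "p dvd L"
    moreover have "p dvd p ^ totient m"
      using n assms(4) by simp
    ultimately have "p dvd p ^ totient m - L"
      by (rule dvd_diff_nat[rotated])
    moreover have "p ^ totient m - L = 1"
      using prime_gt_0_nat[OF assms(1)] by (simp add: L_def)
    ultimately show False
      using assms(1) by simp
  qed
  have period: "is_pow_period p n (ducci n) (p ^ e * L)"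
    unfolding L_def using assms(1) n \<open>\<not> p dvd m\<close> assms(4) by (rule is_pow_period_ducci_prime)
  have "\<not> is_pow_period (p\<^sup>2) n (ducci n) (p ^ e * L)"
  proof (cases "e = 0")
    case True
    then show ?thesis using not_is_pow_period_ducci_sq[OF assms(1-3) \<open>\<not> p dvd L\<close>] by simp
  next
    case False
    then show ?thesis using not_is_pow_period_ducci_sq_dvd[OF assms(1,2,4) _ _ \<open>\<not> p dvd L\<close>] n by simp
  qed
  moreover have "0 < p ^ e * L"
    using period by (simp add: is_pow_period_def)
  ultimately show ?thesis
    using is_pow_period_pow_period[OF period] is_pow_period_dvd[OF _ pow_period_dvd[OF period]] by blast
qed

theorem theorem5p10:
  fixes p k n :: nat
  assumes "prime p" and "p \<ge> 3" and "\<not> wieferich p"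
    and "k > 0" and "n > 0"
  shows "Pmax (p ^ k) n = p ^ (k - 1) * Pmax p n"
proof -
  let ?Q = "pow_period p n (ducci n)"
  have Q: "is_pow_period p n (ducci n) ?Q" and not_sq: "\<not> is_pow_period (p\<^sup>2) n (ducci n) ?Q"
    using pow_period_ducci_prime_not_sq[OF assms(1-3,5)] by auto
  have "Pmax (p ^ k) n = pow_period (p ^ k) n (ducci n)"
    using is_pow_period_prime_power[OF assms(1) Q, of "k - 1"] assms(4,5) prime_gt_0_nat[OF assms(1)]
    by (intro Pmax_eq_pow_period) simp_all
  also have "\<dots> = p ^ (k - 1) * ?Q"
    by (rule pow_period_prime_power[OF assms(1,2,5,4) Q not_sq])
  also have "?Q = Pmax p n"
    using Pmax_eq_pow_period[OF prime_gt_0_nat[OF assms(1)] assms(5) Q] by simp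
  finally show ?thesis .
qed

end
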